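(* Let $m=2$. For every polynomial $f\in\mathbb{C}[\mathbf{a},\mathbf{b}]$, we have $f+Rf\in\mathrm{LSym}[\kappa_1^{-1},\dots,\kappa_n^{-1}]$, where $Rf=f\circ R$.
   Context: Variables $a_1,\dots,a_n,b_1,\dots,b_n$ (subscripts mod $n$), where $a_i=x_1^i$, $b_i=x_2^i$. $\mathrm{LSym}$ is the $\mathbb{C}$-subalgebra of $\mathbb{C}[\mathbf{a},\mathbf{b}]$ generated by $a_i+b_{i-1}$ and $a_ib_i$ for $i\in[n]$. Let $\kappa_i=\sum_{k=0}^{n-1}b_ib_{i+1}\cdots b_{i+k-1}a_{i+k+1}\cdots a_{i+n-1}$. The geometric $R$-matrix is the rational map $R:a_i\mapsto b_i\kappa_{i+1}/\kappa_i$, $b_i\mapsto a_i\kappa_i/\kappa_{i+1}$. *)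

theory Defs
  imports Complex_Main
begin

text \<open>A point of the affine space with coordinates a_1..a_n, b_1..b_n is a pair
  (a, b) of functions nat => complex; the coordinate with index i is read at
  (i mod n), so indices are taken modulo n (index n corresponds to 0).\<close>

type_synonym pt = "(nat \<Rightarrow> complex) \<times> (nat \<Rightarrow> complex)"

definition kappa :: "nat \<Rightarrow> pt \<Rightarrow> nat \<Rightarrow> complex" where
  "kappa n p i =
     (\<Sum>k<n. (\<Prod>j<k. snd p ((i + j) mod n)) *
             (\<Prod>j\<in>{k+1..<n}. fst p ((i + j) mod n)))"

definition geomR :: "nat \<Rightarrow> pt \<Rightarrow> pt" where
  "geomR n p =
     (\<lambda>i. snd p (i mod n) * kappa n p ((i + 1) mod n) / kappa n p (i mod n),
      \<lambda>i. fst p (i mod n) * kappa n p (i mod n) / kappa n p ((i + 1) mod n))"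

text \<open>Polynomial functions in the variables a_i, b_i (= C[a,b], C infinite).\<close>
inductive_set poly_fun :: "nat \<Rightarrow> (pt \<Rightarrow> complex) set" for n where
  pf_const: "(\<lambda>p. c) \<in> poly_fun n"
| pf_a: "i < n \<Longrightarrow> (\<lambda>p. fst p i) \<in> poly_fun n"
| pf_b: "i < n \<Longrightarrow> (\<lambda>p. snd p i) \<in> poly_fun n"
| pf_add: "f \<in> poly_fun n \<Longrightarrow> g \<in> poly_fun n \<Longrightarrow> (\<lambda>p. f p + g p) \<in> poly_fun n"
| pf_mult: "f \<in> poly_fun n \<Longrightarrow> g \<in> poly_fun n \<Longrightarrow> (\<lambda>p. f p * g p) \<in> poly_fun n"

inductive_set lsym :: "nat \<Rightarrow> (pt \<Rightarrow> complex) set" for n where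
  ls_const: "(\<lambda>p. c) \<in> lsym n"
| ls_gen1: "i < n \<Longrightarrow> (\<lambda>p. fst p i + snd p ((i + n - 1) mod n)) \<in> lsym n"
| ls_gen2: "i < n \<Longrightarrow> (\<lambda>p. fst p i * snd p i) \<in> lsym n"
| ls_add: "f \<in> lsym n \<Longrightarrow> g \<in> lsym n \<Longrightarrow> (\<lambda>p. f p + g p) \<in> lsym n"
| ls_mult: "f \<in> lsym n \<Longrightarrow> g \<in> lsym n \<Longrightarrow> (\<lambda>p. f p * g p) \<in> lsym n"

text \<open>LSym[kappa_1^{-1},...,kappa_n^{-1}]: the algebra generated by LSym and the
  inverses of the kappa_i (as functions on the locus where all kappa_i are nonzero).\<close>
inductive_set lsym_loc :: "nat \<Rightarrow> (pt \<Rightarrow> complex) set" for n where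
  ll_lsym: "f \<in> lsym n \<Longrightarrow> f \<in> lsym_loc n"
| ll_inv: "i < n \<Longrightarrow> (\<lambda>p. 1 / kappa n p i) \<in> lsym_loc n"
| ll_add: "f \<in> lsym_loc n \<Longrightarrow> g \<in> lsym_loc n \<Longrightarrow> (\<lambda>p. f p + g p) \<in> lsym_loc n"
| ll_mult: "f \<in> lsym_loc n \<Longrightarrow> g \<in> lsym_loc n \<Longrightarrow> (\<lambda>p. f p * g p) \<in> lsym_loc n"

end

theory Submission
  imports Defs
begin

text \<open>Let A and B be the products of all a_j and of all b_j. Splitting off the first, respectively
  last, summand of kappa gives a_i kappa_i = A + a_i b_i F_i and b_i kappa_{i+1} = B + a_i b_i F_i,
  where F_i, a truncation of kappa_{i+1}, lies in LSym because truncated kappas satisfy a three-term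
  recurrence with coefficients a_{j+1} + b_j and a_j b_j. As R a_i = b_i kappa_{i+1} / kappa_i and
  R b_i = a_i kappa_i / kappa_{i+1}, every generator, and then by induction every polynomial f,
  satisfies f = u + v A and R f = u + v B for some u, v in LSym[1/kappa]; products stay of this form
  because A + B and A B lie in LSym. Hence f + R f = 2 u + v (A + B).\<close>

definition partial_kappa :: "nat \<Rightarrow> pt \<Rightarrow> nat \<Rightarrow> nat \<Rightarrow> complex" where
  "partial_kappa n p i m =
     (\<Sum>k<m. (\<Prod>j<k. snd p ((i + j) mod n)) * (\<Prod>j\<in>{k+1..<m}. fst p ((i + j) mod n)))"

lemma kappa_eq_partial_kappa: "kappa n p i = partial_kappa n p i n"
  unfolding kappa_def partial_kappa_def by simp

lemma partial_kappa_mod: "partial_kappa n p (i mod n) m = partial_kappa n p i m"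
  unfolding partial_kappa_def by (simp add: mod_add_left_eq)

lemma partial_kappa_Suc:
  "partial_kappa n p i (Suc m) =
     fst p ((i + m) mod n) * partial_kappa n p i m + (\<Prod>j<m. snd p ((i + j) mod n))"
proof -
  have "(\<Sum>k<m. (\<Prod>j<k. snd p ((i + j) mod n)) * (\<Prod>j\<in>{k+1..<Suc m}. fst p ((i + j) mod n))) =
          fst p ((i + m) mod n) *
          (\<Sum>k<m. (\<Prod>j<k. snd p ((i + j) mod n)) * (\<Prod>j\<in>{k+1..<m}. fst p ((i + j) mod n)))"
    unfolding sum_distrib_left by (rule sum.cong) (auto simp: prod.atLeastLessThan_Suc)
  then show ?thesis
    unfolding partial_kappa_def by simp
qed

lemma partial_kappa_Suc_shift:
  "partial_kappa n p i (Suc m) =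
     (\<Prod>j\<in>{1..<Suc m}. fst p ((i + j) mod n)) + snd p (i mod n) * partial_kappa n p (Suc i) m"
proof -
  have "(\<Prod>j<Suc k. snd p ((i + j) mod n)) * (\<Prod>j\<in>{Suc k + 1..<Suc m}. fst p ((i + j) mod n)) =
          snd p (i mod n) * ((\<Prod>j<k. snd p ((Suc i + j) mod n)) *
            (\<Prod>j\<in>{k + 1..<m}. fst p ((Suc i + j) mod n)))" for k
    by (simp only: add_Suc prod.lessThan_Suc_shift prod.shift_bounds_Suc_ivl) (simp add: ac_simps)
  then show ?thesis
    unfolding partial_kappa_def by (simp only: sum.lessThan_Suc_shift sum_distrib_left) simp
qed

lemma partial_kappa_Suc_Suc:
  "partial_kappa n p i (Suc (Suc k)) =
     (fst p (Suc (i + k) mod n) + snd p ((i + k) mod n)) * partial_kappa n p i (Suc k)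
     - fst p ((i + k) mod n) * snd p ((i + k) mod n) * partial_kappa n p i k"
  by (simp add: partial_kappa_Suc algebra_simps)

lemma prod_rotate:
  fixes g :: "nat \<Rightarrow> 'a::comm_monoid_mult"
  shows "(\<Prod>j<n. g ((i + j) mod n)) = (\<Prod>j<n. g j)"
proof (induction i)
  case (Suc i)
  show ?case
  proof (cases n)
    case (Suc m)
    have "(\<Prod>j<n. g ((Suc i + j) mod n)) = (\<Prod>j<m. g ((i + Suc j) mod n)) * g ((i + n) mod n)"
      using Suc by (simp add: mult.commute)
    also have "\<dots> = (\<Prod>j<n. g ((i + j) mod n))"
      using Suc by (simp only: prod.lessThan_Suc_shift mod_add_self2 add_0_right mult.commute)
    finally show ?thesis
      using Suc.IH by simp
  qed simp
qed simp

lemma lsym_diff: "f \<in> lsym n \<Longrightarrow> g \<in> lsym n \<Longrightarrow> (\<lambda>p. f p - g p) \<in> lsym n"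
  using ls_add[OF _ ls_mult[OF ls_const[of "-1"]], of f n g] by simp

lemma lsym_prod:
  "finite J \<Longrightarrow> (\<And>j. j \<in> J \<Longrightarrow> f j \<in> lsym n) \<Longrightarrow> (\<lambda>p. \<Prod>j\<in>J. f j p) \<in> lsym n"
  by (induction J rule: finite_induct) (simp_all add: ls_const ls_mult)

lemma lsym_a_plus_b_prev:
  assumes "1 \<le> n"
  shows "(\<lambda>p. fst p (Suc j mod n) + snd p (j mod n)) \<in> lsym n"
proof -
  have "(Suc j mod n + n - 1) mod n = (Suc j mod n + (n - 1)) mod n"
    using assms by simp
  also have "\<dots> = (Suc j + (n - 1)) mod n"
    by (rule mod_add_left_eq)
  also have "\<dots> = (j + n) mod n"
    using assms by simp
  also have "\<dots> = j mod n"
    by simp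
  finally have "(Suc j mod n + n - 1) mod n = j mod n" .
  then show ?thesis
    using ls_gen1[of "Suc j mod n" n] assms by simp
qed

lemma lsym_a_mult_b: "1 \<le> n \<Longrightarrow> (\<lambda>p. fst p (j mod n) * snd p (j mod n)) \<in> lsym n"
  by (simp add: ls_gen2)

lemma partial_kappa_in_lsym:
  assumes "1 \<le> n"
  shows "(\<lambda>p. partial_kappa n p i m) \<in> lsym n"
proof (induction m rule: induct_nat_012)
  case (ge2 k)
  then show ?case
    unfolding partial_kappa_Suc_Suc
    by (intro lsym_diff ls_mult lsym_a_plus_b_prev lsym_a_mult_b assms)
qed (simp_all add: partial_kappa_def ls_const)

lemma a_mult_kappa:
  assumes "i < n"
  shows "fst p i * kappa n p i =
           (\<Prod>j<n. fst p j) + fst p i * snd p i * partial_kappa n p (Suc i) (n - 1)"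
proof -
  obtain m where n: "n = Suc m"
    using assms by (cases n) auto
  have "kappa n p i = (\<Prod>j\<in>{1..<Suc m}. fst p ((i + j) mod n)) + snd p i * partial_kappa n p (Suc i) m"
    using partial_kappa_Suc_shift[of n p i m] assms n by (simp add: kappa_eq_partial_kappa)
  moreover have "fst p i * (\<Prod>j\<in>{1..<Suc m}. fst p ((i + j) mod n)) = (\<Prod>j<Suc m. fst p ((i + j) mod n))"
    using assms
    by (simp only: prod.lessThan_Suc_shift One_nat_def prod.shift_bounds_Suc_ivl atLeast0LessThan) simp
  moreover have "(\<Prod>j<Suc m. fst p ((i + j) mod n)) = (\<Prod>j<n. fst p j)"
    using prod_rotate[of "fst p" i n] n by simp
  ultimately show ?thesis
    using n by (simp add: algebra_simps)
qed

lemma b_mult_kappa_Suc: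
  assumes "i < n"
  shows "snd p i * kappa n p (Suc i mod n) =
           (\<Prod>j<n. snd p j) + fst p i * snd p i * partial_kappa n p (Suc i) (n - 1)"
proof -
  obtain m where n: "n = Suc m"
    using assms by (cases n) auto
  have "(Suc i + m) mod n = i"
    using assms n by (metis add_Suc_shift mod_add_self2 mod_less)
  then have "kappa n p (Suc i mod n) =
               fst p i * partial_kappa n p (Suc i) m + (\<Prod>j<m. snd p ((Suc i + j) mod n))"
    using partial_kappa_Suc[of n p "Suc i" m] n by (simp add: kappa_eq_partial_kappa partial_kappa_mod)
  moreover have "snd p i * (\<Prod>j<m. snd p ((Suc i + j) mod n)) = (\<Prod>j<Suc m. snd p ((i + j) mod n))"
    using assms by (simp only: prod.lessThan_Suc_shift) simp
  moreover have "(\<Prod>j<Suc m. snd p ((i + j) mod n)) = (\<Prod>j<n. snd p j)"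
    using prod_rotate[of "snd p" i n] n by simp
  ultimately show ?thesis
    using n by (simp add: algebra_simps)
qed

lemma prod_a_plus_prod_b_in_lsym:
  assumes "1 \<le> n"
  shows "(\<lambda>p. (\<Prod>j<n. fst p j) + (\<Prod>j<n. snd p j)) \<in> lsym n"
proof -
  have eq: "(\<lambda>p. (\<Prod>j<n. fst p j) + (\<Prod>j<n. snd p j)) =
        (\<lambda>p. partial_kappa n p 0 (Suc n) - fst p 0 * snd p 0 * partial_kappa n p 1 (n - 1))"
    using partial_kappa_Suc[of n _ 0 n] a_mult_kappa[of 0 n] prod_rotate[of "snd _" 0 n] assms
    by (simp add: kappa_eq_partial_kappa)
  have "(\<lambda>p. fst p 0 * snd p 0) \<in> lsym n"
    using assms by (simp add: ls_gen2)
  then show ?thesis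
    unfolding eq by (intro lsym_diff ls_mult[OF _ partial_kappa_in_lsym[OF assms]] partial_kappa_in_lsym[OF assms])
qed

lemma prod_a_mult_prod_b_in_lsym: "(\<lambda>p. (\<Prod>j<n. fst p j) * (\<Prod>j<n. snd p j)) \<in> lsym n"
  unfolding prod.distrib[symmetric] by (rule lsym_prod) (auto intro: ls_gen2)

lemma lsym_loc_diff: "f \<in> lsym_loc n \<Longrightarrow> g \<in> lsym_loc n \<Longrightarrow> (\<lambda>p. f p - g p) \<in> lsym_loc n"
  using ll_add[OF _ ll_mult[OF ll_lsym[OF ls_const[of "-1"]]], of f n g] by simp

lemma lsym_loc_divide_kappa:
  assumes "g \<in> lsym n" "k < n"
  shows "(\<lambda>p. g p / kappa n p k) \<in> lsym_loc n"
proof -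
  have "(\<lambda>p. g p * (1 / kappa n p k)) \<in> lsym_loc n"
    using assms by (intro ll_mult ll_lsym ll_inv)
  then show ?thesis
    by simp
qed

definition lsym_loc_split :: "nat \<Rightarrow> (pt \<Rightarrow> complex) \<Rightarrow> bool" where
  "lsym_loc_split n f \<longleftrightarrow> (\<exists>u\<in>lsym_loc n. \<exists>v\<in>lsym_loc n. \<forall>p. (\<forall>i<n. kappa n p i \<noteq> 0) \<longrightarrow>
     f p = u p + v p * (\<Prod>j<n. fst p j) \<and> f (geomR n p) = u p + v p * (\<Prod>j<n. snd p j))"

lemma lsym_loc_splitI:
  assumes "u \<in> lsym_loc n" "v \<in> lsym_loc n"
    and "\<And>p. \<forall>i<n. kappa n p i \<noteq> 0 \<Longrightarrow> f p = u p + v p * (\<Prod>j<n. fst p j)"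
    and "\<And>p. \<forall>i<n. kappa n p i \<noteq> 0 \<Longrightarrow> f (geomR n p) = u p + v p * (\<Prod>j<n. snd p j)"
  shows "lsym_loc_split n f"
  using assms unfolding lsym_loc_split_def by blast

lemma lsym_loc_splitE:
  assumes "lsym_loc_split n f"
  obtains u v where "u \<in> lsym_loc n" "v \<in> lsym_loc n"
    and "\<And>p. \<forall>i<n. kappa n p i \<noteq> 0 \<Longrightarrow> f p = u p + v p * (\<Prod>j<n. fst p j)"
    and "\<And>p. \<forall>i<n. kappa n p i \<noteq> 0 \<Longrightarrow> f (geomR n p) = u p + v p * (\<Prod>j<n. snd p j)"
  using assms unfolding lsym_loc_split_def by blast

lemma lsym_loc_split_const: "lsym_loc_split n (\<lambda>p. c)"
  by (rule lsym_loc_splitI[of "\<lambda>p. c" _ "\<lambda>p. 0"]) (simp_all add: ll_lsym ls_const)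

lemma lsym_loc_split_add:
  assumes "lsym_loc_split n f" "lsym_loc_split n g"
  shows "lsym_loc_split n (\<lambda>p. f p + g p)"
proof -
  obtain u v where uv: "u \<in> lsym_loc n" "v \<in> lsym_loc n"
    and f: "\<And>p. \<forall>i<n. kappa n p i \<noteq> 0 \<Longrightarrow> f p = u p + v p * (\<Prod>j<n. fst p j)"
    and fR: "\<And>p. \<forall>i<n. kappa n p i \<noteq> 0 \<Longrightarrow> f (geomR n p) = u p + v p * (\<Prod>j<n. snd p j)"
    using assms(1) by (elim lsym_loc_splitE) blast
  obtain u' v' where uv': "u' \<in> lsym_loc n" "v' \<in> lsym_loc n"
    and g: "\<And>p. \<forall>i<n. kappa n p i \<noteq> 0 \<Longrightarrow> g p = u' p + v' p * (\<Prod>j<n. fst p j)"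
    and gR: "\<And>p. \<forall>i<n. kappa n p i \<noteq> 0 \<Longrightarrow> g (geomR n p) = u' p + v' p * (\<Prod>j<n. snd p j)"
    using assms(2) by (elim lsym_loc_splitE) blast
  show ?thesis
    by (rule lsym_loc_splitI[of "\<lambda>p. u p + u' p" _ "\<lambda>p. v p + v' p"])
      (simp_all add: ll_add uv uv' f fR g gR algebra_simps)
qed

lemma lsym_loc_split_mult:
  assumes "1 \<le> n" "lsym_loc_split n f" "lsym_loc_split n g"
  shows "lsym_loc_split n (\<lambda>p. f p * g p)"
proof -
  obtain u v where uv: "u \<in> lsym_loc n" "v \<in> lsym_loc n"
    and f: "\<And>p. \<forall>i<n. kappa n p i \<noteq> 0 \<Longrightarrow> f p = u p + v p * (\<Prod>j<n. fst p j)"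
    and fR: "\<And>p. \<forall>i<n. kappa n p i \<noteq> 0 \<Longrightarrow> f (geomR n p) = u p + v p * (\<Prod>j<n. snd p j)"
    using assms(2) by (elim lsym_loc_splitE) blast
  obtain u' v' where uv': "u' \<in> lsym_loc n" "v' \<in> lsym_loc n"
    and g: "\<And>p. \<forall>i<n. kappa n p i \<noteq> 0 \<Longrightarrow> g p = u' p + v' p * (\<Prod>j<n. fst p j)"
    and gR: "\<And>p. \<forall>i<n. kappa n p i \<noteq> 0 \<Longrightarrow> g (geomR n p) = u' p + v' p * (\<Prod>j<n. snd p j)"
    using assms(3) by (elim lsym_loc_splitE) blast
  let ?A = "\<lambda>p. \<Prod>j<n. fst p j" and ?B = "\<lambda>p. \<Prod>j<n. snd p j"
  have U: "(\<lambda>p. u p * u' p - v p * v' p * (?A p * ?B p)) \<in> lsym_loc n"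
    by (intro lsym_loc_diff ll_mult uv uv' ll_lsym prod_a_mult_prod_b_in_lsym)
  have V: "(\<lambda>p. u p * v' p + u' p * v p + v p * v' p * (?A p + ?B p)) \<in> lsym_loc n"
    by (intro ll_add ll_mult uv uv' ll_lsym prod_a_plus_prod_b_in_lsym assms(1))
  \<comment> \<open>(u + v x) (u' + v' x) = (u u' - v v' x y) + (u v' + u' v + v v' (x + y)) x is symmetric in x, y\<close>
  show ?thesis
    by (rule lsym_loc_splitI[OF U V]) (simp_all add: f fR g gR algebra_simps)
qed

lemma lsym_loc_split_kappa_multiple:
  assumes "g \<in> lsym n" "k < n"
    and "\<And>p. \<forall>i<n. kappa n p i \<noteq> 0 \<Longrightarrow> f p * kappa n p k = g p + c * (\<Prod>j<n. fst p j)"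
    and "\<And>p. \<forall>i<n. kappa n p i \<noteq> 0 \<Longrightarrow> f (geomR n p) * kappa n p k = g p + c * (\<Prod>j<n. snd p j)"
  shows "lsym_loc_split n f"
proof (rule lsym_loc_splitI[of "\<lambda>p. g p / kappa n p k" _ "\<lambda>p. c / kappa n p k"])
  show "(\<lambda>p. g p / kappa n p k) \<in> lsym_loc n" "(\<lambda>p. c / kappa n p k) \<in> lsym_loc n"
    using assms(1,2) ls_const by (auto intro: lsym_loc_divide_kappa)
  fix p
  assume p: "\<forall>i<n. kappa n p i \<noteq> 0"
  then have "kappa n p k \<noteq> 0"
    using assms(2) by blast
  with assms(3,4)[OF p]
  show "f p = g p / kappa n p k + c / kappa n p k * (\<Prod>j<n. fst p j)"
    and "f (geomR n p) = g p / kappa n p k + c / kappa n p k * (\<Prod>j<n. snd p j)"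
    by (simp_all add: field_simps)
qed

lemma lsym_loc_split_a:
  assumes "i < n"
  shows "lsym_loc_split n (\<lambda>p. fst p i)"
proof (rule lsym_loc_split_kappa_multiple[where c = 1])
  show "(\<lambda>p. fst p i * snd p i * partial_kappa n p (Suc i) (n - 1)) \<in> lsym n"
    using assms by (intro ls_mult ls_gen2 partial_kappa_in_lsym) auto
  fix p
  assume "\<forall>i<n. kappa n p i \<noteq> 0"
  then have "fst (geomR n p) i * kappa n p i = snd p i * kappa n p (Suc i mod n)"
    using assms by (simp add: geomR_def)
  then show "fst (geomR n p) i * kappa n p i =
               fst p i * snd p i * partial_kappa n p (Suc i) (n - 1) + 1 * (\<Prod>j<n. snd p j)"
    using b_mult_kappa_Suc[OF assms] by simp
qed (use assms a_mult_kappa[OF assms] in simp_all)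

lemma lsym_loc_split_b:
  assumes "i < n"
  shows "lsym_loc_split n (\<lambda>p. snd p i)"
proof (rule lsym_loc_split_kappa_multiple[where c = "-1" and k = "Suc i mod n"])
  show "(\<lambda>p. ((\<Prod>j<n. fst p j) + (\<Prod>j<n. snd p j)) +
               fst p i * snd p i * partial_kappa n p (Suc i) (n - 1)) \<in> lsym n"
    using assms by (intro ls_add prod_a_plus_prod_b_in_lsym ls_mult ls_gen2 partial_kappa_in_lsym) auto
  fix p
  assume "\<forall>i<n. kappa n p i \<noteq> 0"
  then have "snd (geomR n p) i * kappa n p (Suc i mod n) = fst p i * kappa n p i"
    using assms by (simp add: geomR_def)
  then show "snd (geomR n p) i * kappa n p (Suc i mod n) =
               ((\<Prod>j<n. fst p j) + (\<Prod>j<n. snd p j)) +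
               fst p i * snd p i * partial_kappa n p (Suc i) (n - 1) + - 1 * (\<Prod>j<n. snd p j)"
    using a_mult_kappa[OF assms] by simp
qed (use assms b_mult_kappa_Suc[OF assms] in simp_all)

lemma poly_fun_lsym_loc_split:
  assumes "1 \<le> n" "f \<in> poly_fun n"
  shows "lsym_loc_split n f"
  using assms(2)
  by induction
    (auto intro: lsym_loc_split_const lsym_loc_split_a lsym_loc_split_b
      lsym_loc_split_add lsym_loc_split_mult[OF assms(1)])

theorem lemmaB3:
  fixes n :: nat and f :: "pt \<Rightarrow> complex"
  assumes "n \<ge> 1" and "f \<in> poly_fun n"
  shows "\<exists>h \<in> lsym_loc n. \<forall>p. (\<forall>i<n. kappa n p i \<noteq> 0) \<longrightarrow>
           f p + f (geomR n p) = h p"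
proof -
  obtain u v where uv: "u \<in> lsym_loc n" "v \<in> lsym_loc n"
    and f: "\<And>p. \<forall>i<n. kappa n p i \<noteq> 0 \<Longrightarrow> f p = u p + v p * (\<Prod>j<n. fst p j)"
    and fR: "\<And>p. \<forall>i<n. kappa n p i \<noteq> 0 \<Longrightarrow> f (geomR n p) = u p + v p * (\<Prod>j<n. snd p j)"
    using poly_fun_lsym_loc_split[OF assms] by (elim lsym_loc_splitE) blast
  have h: "(\<lambda>p. u p + u p + v p * ((\<Prod>j<n. fst p j) + (\<Prod>j<n. snd p j))) \<in> lsym_loc n"
    by (intro ll_add ll_mult uv ll_lsym prod_a_plus_prod_b_in_lsym assms(1))
  show ?thesis
    by (rule bexI[OF _ h]) (simp add: f fR algebra_simps)
qed

end
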